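(* Let $\Gamma\vdash t:A$ be derivable in the simply typed distributive $\lambda$-calculus. Then: (1) if $t=x$, then $\Gamma=\Gamma',x:B$ for some $\Gamma'$ and $B$ with $B\equiv A$; (2) if $t=\lambda x.s$, then $\Gamma,x:B\vdash s:C$ for some $B,C$ with $B\Rightarrow C\equiv A$; (3) if $t=\langle s_1,s_2\rangle$, then $\Gamma\vdash s_i:B_i$ for $i=1,2$, for some $B_1,B_2$ with $B_1\wedge B_2\equiv A$; (4) if $t=su$, then for some $B$, $\Gamma\vdash s:B\Rightarrow A$ and $\Gamma\vdash u:B$; (5) if $t=\pi_i s$, then $\Gamma\vdash s:B_1\wedge B_2$ for some $B_1,B_2$ with $B_i=A$.
   Context: Terms: $t,s,u ::= x \mid \lambda x.t \mid ts \mid \langle t,s\rangle \mid \pi_1 t \mid \pi_2 t$ (up to $\alpha$-renaming). Types: $A ::= \tau \mid A\Rightarrow A \mid A\wedge A$ with $\tau$ a single atomic type; $A\Rightarrow B\wedge C$ means $A\Rightarrow(B\wedge C)$. The relation $\equiv$ on types is the smallest equivalence relation (reflexive, symmetric, transitive) that contains $A\Rightarrow (B\wedge C)\equiv (A\Rightarrow B)\wedge(A\Rightarrow C)$ for all $A,B,C$, and is a congruence: $A\equiv C$ implies $A\Rightarrow B\equiv C\Rightarrow B$ and $A\wedge B\equiv C\wedge B$; $B\equiv C$ implies $A\Rightarrow B\equiv A\Rightarrow C$ and $A\wedge B\equiv A\wedge C$. Typing contexts $\Gamma$ are finite assignments of types to variables. Typing rules: $\Gamma,x:A\vdash x:A$;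 if $\Gamma\vdash t:A$ and $A\equiv B$ then $\Gamma\vdash t:B$; if $\Gamma,x:A\vdash t:B$ then $\Gamma\vdash \lambda x.t:A\Rightarrow B$; if $\Gamma\vdash t:A\Rightarrow B$ and $\Gamma\vdash s:A$ then $\Gamma\vdash ts:B$; if $\Gamma\vdash t:A$ and $\Gamma\vdash s:B$ then $\Gamma\vdash\langle t,s\rangle:A\wedge B$; if $\Gamma\vdash t:A\wedge B$ then $\Gamma\vdash\pi_1 t:A$ and $\Gamma\vdash \pi_2 t:B$. *)

theory Defs
  imports Main
begin

text \<open>Raw lambda terms with named variables (variables of type nat).
  Typing is invariant under alpha-renaming, so we work on raw terms.\<close>
datatype trm =
    Var nat
  | Lam nat trm
  | App trm trm
  | Pair trm trm
  | Fst trm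
  | Snd trm

datatype ty =
    Atom
  | Fun ty ty
  | Conj ty ty

inductive teq :: "ty \<Rightarrow> ty \<Rightarrow> bool" where
  teq_dist: "teq (Fun A (Conj B C)) (Conj (Fun A B) (Fun A C))"
| teq_refl: "teq A A"
| teq_sym: "teq A B \<Longrightarrow> teq B A"
| teq_trans: "teq A B \<Longrightarrow> teq B C \<Longrightarrow> teq A C"
| teq_fun_l: "teq A C \<Longrightarrow> teq (Fun A B) (Fun C B)"
| teq_conj_l: "teq A C \<Longrightarrow> teq (Conj A B) (Conj C B)"
| teq_fun_r: "teq B C \<Longrightarrow> teq (Fun A B) (Fun A C)"
| teq_conj_r: "teq B C \<Longrightarrow> teq (Conj A B) (Conj A C)"

text \<open>Typing contexts: finite partial maps from variables to types;
  the context "Gamma, x:A" is the update Gamma(x |-> A).\<close>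
inductive typing :: "(nat \<rightharpoonup> ty) \<Rightarrow> trm \<Rightarrow> ty \<Rightarrow> bool" where
  ty_var: "finite (dom \<Gamma>) \<Longrightarrow> typing (\<Gamma>(x \<mapsto> A)) (Var x) A"
| ty_eq: "typing \<Gamma> t A \<Longrightarrow> teq A B \<Longrightarrow> typing \<Gamma> t B"
| ty_lam: "typing (\<Gamma>(x \<mapsto> A)) t B \<Longrightarrow> typing \<Gamma> (Lam x t) (Fun A B)"
| ty_app: "typing \<Gamma> t (Fun A B) \<Longrightarrow> typing \<Gamma> s A \<Longrightarrow> typing \<Gamma> (App t s) B"
| ty_pair: "typing \<Gamma> t A \<Longrightarrow> typing \<Gamma> s B \<Longrightarrow> typing \<Gamma> (Pair t s) (Conj A B)"
| ty_fst: "typing \<Gamma> t (Conj A B) \<Longrightarrow> typing \<Gamma> (Fst t) A"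
| ty_snd: "typing \<Gamma> t (Conj A B) \<Longrightarrow> typing \<Gamma> (Snd t) B"

end

theory Submission
  imports Defs
begin

text \<open>Each generation lemma is a rule induction on the derivation in which only the
  syntax-directed rule for the term former and the conversion rule survive. A conversion step is
  absorbed by transitivity of the type equivalence for variables, abstractions and pairs; for
  applications and projections it is instead pushed onto the subterm by congruence, which is why
  those cases give the type A exactly rather than up to equivalence.\<close>

lemma typing_Var_inv:
  assumes "typing \<Gamma> (Var x) A"
  shows "\<exists>\<Gamma>' B. \<Gamma> = \<Gamma>'(x \<mapsto> B) \<and> teq B A"
  using assms
proof (induction \<Gamma> "Var x" A rule: typing.induct)
  case (ty_var \<Gamma> A)
  then show ?case using teq_refl by blast
next
  case (ty_eq \<Gamma> A B)
  then show ?case using teq_trans by blast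
qed

lemma typing_Lam_inv:
  assumes "typing \<Gamma> (Lam x s) A"
  shows "\<exists>B C. typing (\<Gamma>(x \<mapsto> B)) s C \<and> teq (Fun B C) A"
  using assms
proof (induction \<Gamma> "Lam x s" A rule: typing.induct)
  case (ty_eq \<Gamma> A B)
  then show ?case using teq_trans by blast
next
  case (ty_lam \<Gamma> A B)
  then show ?case using teq_refl by blast
qed

lemma typing_Pair_inv:
  assumes "typing \<Gamma> (Pair s1 s2) A"
  shows "\<exists>B1 B2. typing \<Gamma> s1 B1 \<and> typing \<Gamma> s2 B2 \<and> teq (Conj B1 B2) A"
  using assms
proof (induction \<Gamma> "Pair s1 s2" A rule: typing.induct)
  case (ty_eq \<Gamma> A B)
  then show ?case using teq_trans by blast
next
  case (ty_pair \<Gamma> A B)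
  then show ?case using teq_refl by blast
qed

lemma typing_App_inv:
  assumes "typing \<Gamma> (App s u) A"
  shows "\<exists>B. typing \<Gamma> s (Fun B A) \<and> typing \<Gamma> u B"
  using assms
proof (induction \<Gamma> "App s u" A rule: typing.induct)
  case (ty_eq \<Gamma> A A')
  then obtain B where "typing \<Gamma> s (Fun B A)" "typing \<Gamma> u B" by blast
  moreover have "teq (Fun B A) (Fun B A')" using \<open>teq A A'\<close> by (rule teq_fun_r)
  ultimately show ?case using typing.ty_eq by blast
next
  case (ty_app \<Gamma> A B)
  then show ?case by blast
qed

lemma typing_Fst_inv:
  assumes "typing \<Gamma> (Fst s) A"
  shows "\<exists>B. typing \<Gamma> s (Conj A B)"
  using assms
proof (induction \<Gamma> "Fst s" A rule: typing.induct)
  case (ty_eq \<Gamma> A A')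
  then obtain B where "typing \<Gamma> s (Conj A B)" by blast
  moreover have "teq (Conj A B) (Conj A' B)" using \<open>teq A A'\<close> by (rule teq_conj_l)
  ultimately show ?case using typing.ty_eq by blast
next
  case (ty_fst \<Gamma> A B)
  then show ?case by blast
qed

lemma typing_Snd_inv:
  assumes "typing \<Gamma> (Snd s) A"
  shows "\<exists>B. typing \<Gamma> s (Conj B A)"
  using assms
proof (induction \<Gamma> "Snd s" A rule: typing.induct)
  case (ty_eq \<Gamma> A A')
  then obtain B where "typing \<Gamma> s (Conj B A)" by blast
  moreover have "teq (Conj B A) (Conj B A')" using \<open>teq A A'\<close> by (rule teq_conj_r)
  ultimately show ?case using typing.ty_eq by blast
next
  case (ty_snd \<Gamma> A B)
  then show ?case by blast
qed

theorem lemma2: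
  assumes "typing \<Gamma> t A"
  shows "(\<forall>x. t = Var x \<longrightarrow>
            (\<exists>\<Gamma>' B. \<Gamma> = \<Gamma>'(x \<mapsto> B) \<and> teq B A))
       \<and> (\<forall>x s. t = Lam x s \<longrightarrow>
            (\<exists>B C. typing (\<Gamma>(x \<mapsto> B)) s C \<and> teq (Fun B C) A))
       \<and> (\<forall>s1 s2. t = Pair s1 s2 \<longrightarrow>
            (\<exists>B1 B2. typing \<Gamma> s1 B1 \<and> typing \<Gamma> s2 B2 \<and> teq (Conj B1 B2) A))
       \<and> (\<forall>s u. t = App s u \<longrightarrow>
            (\<exists>B. typing \<Gamma> s (Fun B A) \<and> typing \<Gamma> u B))
       \<and> (\<forall>s. t = Fst s \<longrightarrow>
            (\<exists>B1 B2. typing \<Gamma> s (Conj B1 B2) \<and> B1 = A))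
       \<and> (\<forall>s. t = Snd s \<longrightarrow>
            (\<exists>B1 B2. typing \<Gamma> s (Conj B1 B2) \<and> B2 = A))"
  using typing_Var_inv[of \<Gamma> _ A] typing_Lam_inv[of \<Gamma> _ _ A] typing_Pair_inv[of \<Gamma> _ _ A]
    typing_App_inv[of \<Gamma> _ _ A] typing_Fst_inv[of \<Gamma> _ A] typing_Snd_inv[of \<Gamma> _ A] assms
  by blast

end
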